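(* If $K$ is a quadratic extension of $\mathbb{Q}$ with ring of integers $\mathfrak{o}_K$, then the group $\mathcal{U}_1(\mathfrak{o}_K[C_2])$ is hyperbolic.
   Context: $C_2$ is the cyclic group of order $2$; $\mathcal{U}_1(\mathfrak{o}_K[C_2])$ is the group of units of augmentation $1$ in the group ring. Hyperbolic means Gromov-hyperbolic (Cayley graph with word metric for a finite generating set is a hyperbolic metric space). *)

theory Defs
  imports Complex_Main "HOL-Computational_Algebra.Polynomial" "HOL-Algebra.Ring" "HOL-Algebra.Generated_Groups"
begin

definition subfield_of_complex :: "complex set \<Rightarrow> bool" where
  "subfield_of_complex K \<longleftrightarrow> 0 \<in> K \<and> 1 \<in> K \<and>
     (\<forall>x\<in>K. \<forall>y\<in>K. x + y \<in> K \<and> x * y \<in> K) \<and>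
     (\<forall>x\<in>K. - x \<in> K \<and> inverse x \<in> K)"

definition quadratic_field :: "complex set \<Rightarrow> bool" where
  "quadratic_field K \<longleftrightarrow> subfield_of_complex K \<and>
     (\<exists>\<alpha>\<in>K. \<alpha> \<notin> \<rat> \<and> K = {of_rat a + of_rat b * \<alpha> | a b. True})"

definition ring_of_integers :: "complex set \<Rightarrow> complex set" where
  "ring_of_integers K = {x \<in> K. algebraic_int x}"

text \<open>An element a + b g (g the generator of C_2) is represented by the pair (a, b).\<close>
definition group_ring_C2 :: "complex set \<Rightarrow> (complex \<times> complex) ring" where
  "group_ring_C2 Ok = \<lparr> carrier = Ok \<times> Ok,
      mult = (\<lambda>(a, b) (c, d). (a * c + b * d, a * d + b * c)),
      one = (1, 0),
      zero = (0, 0),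
      add = (\<lambda>(a, b) (c, d). (a + c, b + d)) \<rparr>"

definition augmentation :: "complex \<times> complex \<Rightarrow> complex" where
  "augmentation u = fst u + snd u"

definition U1 :: "complex set \<Rightarrow> (complex \<times> complex) monoid" where
  "U1 Ok = (units_of (group_ring_C2 Ok))
            \<lparr> carrier := {u \<in> Units (group_ring_C2 Ok). augmentation u = 1} \<rparr>"

definition word_len :: "('a, 'b) monoid_scheme \<Rightarrow> 'a set \<Rightarrow> 'a \<Rightarrow> nat" where
  "word_len G S x = (LEAST n. \<exists>ws. length ws = n \<and> set ws \<subseteq> S \<union> m_inv G ` S \<and>
                         foldr (\<otimes>\<^bsub>G\<^esub>) ws \<one>\<^bsub>G\<^esub> = x)"

definition word_dist :: "('a, 'b) monoid_scheme \<Rightarrow> 'a set \<Rightarrow> 'a \<Rightarrow> 'a \<Rightarrow> real" where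
  "word_dist G S x y = real (word_len G S (inv\<^bsub>G\<^esub> x \<otimes>\<^bsub>G\<^esub> y))"

definition gromov_product :: "('a \<Rightarrow> 'a \<Rightarrow> real) \<Rightarrow> 'a \<Rightarrow> 'a \<Rightarrow> 'a \<Rightarrow> real" where
  "gromov_product d w x y = (d w x + d w y - d x y) / 2"

definition delta_hyperbolic :: "'a set \<Rightarrow> ('a \<Rightarrow> 'a \<Rightarrow> real) \<Rightarrow> real \<Rightarrow> bool" where
  "delta_hyperbolic X d \<delta> \<longleftrightarrow> (\<forall>x\<in>X. \<forall>y\<in>X. \<forall>z\<in>X. \<forall>w\<in>X.
      gromov_product d w x z \<ge> min (gromov_product d w x y) (gromov_product d w y z) - \<delta>)"

definition hyperbolic_group :: "('a, 'b) monoid_scheme \<Rightarrow> bool" where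
  "hyperbolic_group G \<longleftrightarrow> group G \<and>
     (\<exists>S. finite S \<and> S \<subseteq> carrier G \<and> generate G S = carrier G \<and>
          (\<exists>\<delta>\<ge>0. delta_hyperbolic (carrier G) (word_dist G S) \<delta>))"

end

theory Submission
  imports Defs
begin

text \<open>Write \<open>u = a + b g\<close>. The twisted augmentation \<open>u \<mapsto> a - b\<close> (evaluation at the character
  \<open>g \<mapsto> -1\<close>) is multiplicative and injective on elements of augmentation \<open>a + b = 1\<close>, so it
  embeds \<open>U\<^sub>1(O\<^sub>K[C\<^sub>2])\<close> into the units of \<open>O\<^sub>K\<close>, and \<open>u \<mapsto> ln |a - b|\<close> is a homomorphism to
  the reals. Its sublevel sets are finite: a unit \<open>x\<close> of \<open>O\<^sub>K\<close> has norm \<open>x x' = \<plusminus>1\<close>, so bounding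
  \<open>|ln |x||\<close> bounds \<open>x\<close>, its conjugate \<open>x'\<close> and hence its integral trace. A group with such a
  homomorphism \<open>f\<close> is either finite or has infinite cyclic image under \<open>f\<close> with finite kernel;
  in both cases every element is a word of length at most \<open>|f x| + 1\<close> in a finite generating
  set, so the word metric is within bounded distance of the pullback \<open>|f x - f y|\<close> of the real
  line and therefore hyperbolic.\<close>

section \<open>Hyperbolicity from a discrete homomorphism to the reals\<close>

lemma delta_hyperbolic_pullback_real_line:
  fixes h :: "'a \<Rightarrow> real"
  shows "delta_hyperbolic X (\<lambda>x y. \<bar>h x - h y\<bar>) 0"
  unfolding delta_hyperbolic_def gromov_product_def
  by (simp add: min_def abs_if split: if_splits)

lemma delta_hyperbolic_perturb:
  assumes hyp: "delta_hyperbolic X d' \<delta>"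
    and close: "\<And>x y. x \<in> X \<Longrightarrow> y \<in> X \<Longrightarrow> \<bar>d x y - d' x y\<bar> \<le> c"
  shows "delta_hyperbolic X d (\<delta> + 3 * c)"
  unfolding delta_hyperbolic_def
proof (intro ballI)
  fix x y z w assume X: "x \<in> X" "y \<in> X" "z \<in> X" "w \<in> X"
  have gp_close: "\<bar>gromov_product d w p q - gromov_product d' w p q\<bar> \<le> 3 * c / 2"
    if "p \<in> X" "q \<in> X" for p q
  proof -
    have "\<bar>d w p - d' w p\<bar> \<le> c" "\<bar>d w q - d' w q\<bar> \<le> c" "\<bar>d p q - d' p q\<bar> \<le> c"
      using close X that by auto
    then show ?thesis by (simp add: gromov_product_def abs_le_iff field_simps)
  qed
  have "min (gromov_product d' w x y) (gromov_product d' w y z) - \<delta> \<le> gromov_product d' w x z"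
    using hyp X unfolding delta_hyperbolic_def by blast
  with gp_close[OF X(1,2)] gp_close[OF X(2,3)] gp_close[OF X(1,3)]
  show "min (gromov_product d w x y) (gromov_product d w y z) - (\<delta> + 3 * c)
      \<le> gromov_product d w x z"
    unfolding abs_le_iff min_def by (auto split: if_splits)
qed

lemma word_len_le:
  assumes "set ws \<subseteq> S \<union> m_inv G ` S" "foldr (\<otimes>\<^bsub>G\<^esub>) ws \<one>\<^bsub>G\<^esub> = x"
  shows "word_len G S x \<le> length ws"
  unfolding word_len_def using assms by (intro Least_le) blast

lemma word_len_attained:
  assumes "set ws \<subseteq> S \<union> m_inv G ` S" "foldr (\<otimes>\<^bsub>G\<^esub>) ws \<one>\<^bsub>G\<^esub> = x"
  obtains vs where "length vs = word_len G S x" "set vs \<subseteq> S \<union> m_inv G ` S"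
    "foldr (\<otimes>\<^bsub>G\<^esub>) vs \<one>\<^bsub>G\<^esub> = x"
proof -
  have "\<exists>n vs. length vs = n \<and> set vs \<subseteq> S \<union> m_inv G ` S \<and> foldr (\<otimes>\<^bsub>G\<^esub>) vs \<one>\<^bsub>G\<^esub> = x"
    using assms by blast
  from LeastI_ex[OF this] show ?thesis
    using that unfolding word_len_def by blast
qed

lemma (in monoid) foldr_replicate_nat_pow:
  "e \<in> carrier G \<Longrightarrow> foldr (\<otimes>) (replicate n e) \<one> = e [^] n"
  by (induction n) (simp_all add: nat_pow_Suc2[symmetric] del: nat_pow_Suc)

lemma (in group) int_pow_as_word:
  assumes e: "e \<in> carrier G"
  obtains ws where "set ws \<subseteq> {e, inv e}" "length ws = nat \<bar>k\<bar>" "foldr (\<otimes>) ws \<one> = e [^] (k::int)"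
proof (cases k rule: int_cases2)
  case (nonneg n)
  then show ?thesis
    using e by (intro that[of "replicate n e"])
      (auto simp: foldr_replicate_nat_pow int_pow_int simp del: foldr_replicate)
next
  case (nonpos n)
  then show ?thesis
    using e by (intro that[of "replicate n (inv e)"])
      (auto simp: foldr_replicate_nat_pow nat_pow_inv int_pow_neg_int simp del: foldr_replicate)
qed

locale additive_hom = group G for G (structure) +
  fixes f :: "'a \<Rightarrow> real"
  assumes f_mult: "x \<in> carrier G \<Longrightarrow> y \<in> carrier G \<Longrightarrow> f (x \<otimes> y) = f x + f y"
begin

lemma f_one: "f \<one> = 0"
  using f_mult[of \<one> \<one>] by simp

lemma f_inv: "x \<in> carrier G \<Longrightarrow> f (inv x) = - f x"
  using f_mult[of "inv x" x] f_one by simp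

lemma f_nat_pow: "x \<in> carrier G \<Longrightarrow> f (x [^] (n::nat)) = real n * f x"
  by (induction n) (simp_all add: f_one f_mult distrib_right)

lemma f_int_pow: "x \<in> carrier G \<Longrightarrow> f (x [^] (k::int)) = of_int k * f x"
  by (cases k rule: int_cases2) (simp_all add: int_pow_int int_pow_neg_int f_inv f_nat_pow)

lemma word_in_generate_bounded:
  assumes S: "S \<subseteq> carrier G" "\<And>s. s \<in> S \<Longrightarrow> \<bar>f s\<bar> \<le> 1" and ws: "set ws \<subseteq> S \<union> m_inv G ` S"
  shows "foldr (\<otimes>) ws \<one> \<in> generate G S \<and> \<bar>f (foldr (\<otimes>) ws \<one>)\<bar> \<le> length ws"
  using ws
proof (induction ws)
  case Nil
  then show ?case by (simp add: generate.one f_one)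
next
  case (Cons a ws)
  let ?w = "foldr (\<otimes>) ws \<one>"
  have IH: "?w \<in> generate G S" "\<bar>f ?w\<bar> \<le> length ws"
    using Cons by auto
  have a: "a \<in> generate G S" "\<bar>f a\<bar> \<le> 1"
    using Cons.prems S by (auto intro: generate.incl generate.inv simp: f_inv subset_iff)
  have "f (a \<otimes> ?w) = f a + f ?w"
    using a(1) IH(1) generate_incl[OF S(1)] by (intro f_mult) auto
  then have "\<bar>f (a \<otimes> ?w)\<bar> \<le> length (a # ws)"
    using abs_triangle_ineq[of "f a" "f ?w"] a(2) IH(2) by simp
  then show ?case
    using generate.eng[OF a(1) IH(1)] by (simp only: foldr_Cons comp_apply)
qed

lemma hyperbolic_if_words_short:
  assumes S: "finite S" "S \<subseteq> carrier G" "\<And>s. s \<in> S \<Longrightarrow> \<bar>f s\<bar> \<le> 1"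
    and short: "\<And>x. x \<in> carrier G \<Longrightarrow>
      \<exists>ws. set ws \<subseteq> S \<union> m_inv G ` S \<and> foldr (\<otimes>) ws \<one> = x \<and> length ws \<le> \<bar>f x\<bar> + c"
  shows "hyperbolic_group G"
proof -
  have "carrier G \<subseteq> generate G S"
  proof
    fix x assume "x \<in> carrier G"
    then obtain ws where ws: "set ws \<subseteq> S \<union> m_inv G ` S" "foldr (\<otimes>) ws \<one> = x"
      using short by blast
    show "x \<in> generate G S"
      using word_in_generate_bounded[OF S(2,3) ws(1)] ws(2) by simp
  qed
  then have generates: "generate G S = carrier G"
    using generate_incl[OF S(2)] by (rule equalityI[rotated])
  have len: "\<bar>f x\<bar> \<le> word_len G S x \<and> word_len G S x \<le> \<bar>f x\<bar> + c" if x: "x \<in> carrier G" for x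
  proof -
    obtain ws where ws: "set ws \<subseteq> S \<union> m_inv G ` S" "foldr (\<otimes>) ws \<one> = x" "length ws \<le> \<bar>f x\<bar> + c"
      using short[OF x] by blast
    obtain vs where vs: "length vs = word_len G S x" "set vs \<subseteq> S \<union> m_inv G ` S" "foldr (\<otimes>) vs \<one> = x"
      using word_len_attained[OF ws(1,2)] .
    show ?thesis
      using word_in_generate_bounded[OF S(2,3) vs(2)] vs word_len_le[OF ws(1,2)] ws(3) by auto
  qed
  have "c \<ge> 0"
    using len[of \<one>] f_one by simp
  have "\<bar>word_dist G S x y - \<bar>f x - f y\<bar>\<bar> \<le> c" if "x \<in> carrier G" "y \<in> carrier G" for x y
  proof -
    have "f (inv x \<otimes> y) = f y - f x"
      using that by (simp add: f_mult f_inv)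
    then show ?thesis
      using len[of "inv x \<otimes> y"] that unfolding word_dist_def by (auto simp: abs_le_iff)
  qed
  then have "delta_hyperbolic (carrier G) (word_dist G S) (0 + 3 * c)"
    by (rule delta_hyperbolic_perturb[OF delta_hyperbolic_pullback_real_line])
  then show ?thesis
    unfolding hyperbolic_group_def using is_group S(1,2) generates \<open>c \<ge> 0\<close>
    by (intro conjI exI[of _ S] exI[of _ "3 * c"]) auto
qed

end

lemma (in group) hyperbolic_if_finite:
  assumes "finite (carrier G)"
  shows "hyperbolic_group G"
proof -
  interpret additive_hom G "\<lambda>_. 0"
    by unfold_locales simp
  show ?thesis
  proof (rule hyperbolic_if_words_short[of "carrier G" 1])
    fix x assume "x \<in> carrier G"
    then show "\<exists>ws. set ws \<subseteq> carrier G \<union> m_inv G ` carrier G \<and> foldr (\<otimes>) ws \<one> = x \<and>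
        real (length ws) \<le> \<bar>0\<bar> + 1"
      by (intro exI[of _ "[x]"]) auto
  qed (use assms in auto)
qed

context additive_hom
begin

lemma values_cyclic_if_discrete:
  assumes fin: "\<And>C. finite {x \<in> carrier G. \<bar>f x\<bar> \<le> C}"
    and nonzero: "x\<^sub>0 \<in> carrier G" "f x\<^sub>0 \<noteq> 0"
  obtains \<eta> where "\<eta> \<in> carrier G" "f \<eta> > 0" "\<And>x. x \<in> carrier G \<Longrightarrow> \<exists>k::int. f x = of_int k * f \<eta>"
proof -
  obtain g where g: "g \<in> carrier G" "f g > 0"
  proof (cases "f x\<^sub>0 > 0")
    case False
    then show ?thesis
      using that[of "inv x\<^sub>0"] nonzero f_inv[OF nonzero(1)] by simp
  qed (use nonzero in blast)
  define P where "P = {x \<in> carrier G. 0 < f x \<and> f x \<le> f g}"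
  have "finite P"
    unfolding P_def by (rule finite_subset[OF _ fin[of "f g"]]) auto
  moreover have "g \<in> P"
    using g unfolding P_def by simp
  ultimately obtain \<eta> where "is_arg_min f (\<lambda>x. x \<in> P) \<eta>"
    using ex_is_arg_min_if_finite by blast
  then have \<eta>: "\<eta> \<in> P" and minimal: "\<And>x. x \<in> P \<Longrightarrow> f \<eta> \<le> f x"
    by (auto simp: is_arg_min_linorder)
  have \<eta>_carrier: "\<eta> \<in> carrier G" and \<eta>_pos: "f \<eta> > 0"
    using \<eta> unfolding P_def by auto
  have "\<exists>k::int. f x = of_int k * f \<eta>" if x: "x \<in> carrier G" for x
  proof
    define k where "k = \<lfloor>f x / f \<eta>\<rfloor>"
    define y where "y = x \<otimes> inv (\<eta> [^] k)"
    have y: "y \<in> carrier G" "f y = f x - of_int k * f \<eta>"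
      unfolding y_def using x \<eta>_carrier by (simp_all add: f_mult f_inv f_int_pow)
    have "of_int k \<le> f x / f \<eta>" "f x / f \<eta> < of_int k + 1"
      unfolding k_def by linarith+
    then have "of_int k * f \<eta> \<le> f x" "f x < (of_int k + 1) * f \<eta>"
      using \<eta>_pos by (simp_all add: field_simps)
    then have "0 \<le> f y" "f y < f \<eta>"
      using y(2) by (simp_all add: algebra_simps)
    moreover have "f y \<le> f g"
      using \<open>f y < f \<eta>\<close> \<eta> unfolding P_def by simp
    ultimately have "f y = 0"
      using minimal[of y] y(1) unfolding P_def by force
    then show "f x = of_int k * f \<eta>"
      using y(2) by simp
  qed
  then show ?thesis
    using that \<eta>_carrier \<eta>_pos by blast
qed

lemma hyperbolic_if_sublevels_finite:
  assumes fin: "\<And>C. finite {x \<in> carrier G. \<bar>f x\<bar> \<le> C}"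
  shows "hyperbolic_group G"
proof (cases "\<forall>x\<in>carrier G. f x = 0")
  case True
  then have "carrier G = {x \<in> carrier G. \<bar>f x\<bar> \<le> 0}"
    by auto
  then show ?thesis
    using hyperbolic_if_finite fin[of 0] by simp
next
  case False
  then obtain \<eta> where \<eta>: "\<eta> \<in> carrier G" "f \<eta> > 0"
    and multiple: "\<And>x. x \<in> carrier G \<Longrightarrow> \<exists>k::int. f x = of_int k * f \<eta>"
    using values_cyclic_if_discrete[OF fin] by metis
  define T where "T = {t \<in> carrier G. f t = 0}"
  interpret scaled: additive_hom G "\<lambda>x. f x / f \<eta>"
    by unfold_locales (simp add: f_mult add_divide_distrib)
  show ?thesis
  proof (rule scaled.hyperbolic_if_words_short[of "insert \<eta> T" 1])
    show "finite (insert \<eta> T)"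
      using fin[of 0] unfolding T_def by simp
    show "insert \<eta> T \<subseteq> carrier G"
      using \<eta> unfolding T_def by auto
    show "\<And>s. s \<in> insert \<eta> T \<Longrightarrow> \<bar>f s / f \<eta>\<bar> \<le> 1"
      using \<eta> unfolding T_def by auto
  next
    fix x assume x: "x \<in> carrier G"
    obtain k where k: "f x = of_int k * f \<eta>"
      using multiple[OF x] by blast
    define t where "t = x \<otimes> inv (\<eta> [^] k)"
    have "t \<in> T"
      unfolding t_def T_def using x \<eta> k by (simp add: f_mult f_inv f_int_pow)
    have x_eq: "x = t \<otimes> \<eta> [^] k"
      unfolding t_def using x \<eta>(1) by (simp add: m_assoc)
    obtain ws where ws: "set ws \<subseteq> {\<eta>, inv \<eta>}" "length ws = nat \<bar>k\<bar>" "foldr (\<otimes>) ws \<one> = \<eta> [^] k"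
      using int_pow_as_word[OF \<eta>(1)] .
    show "\<exists>ws. set ws \<subseteq> insert \<eta> T \<union> m_inv G ` insert \<eta> T \<and> foldr (\<otimes>) ws \<one> = x \<and>
        real (length ws) \<le> \<bar>f x / f \<eta>\<bar> + 1"
    proof (intro exI conjI)
      show "set (t # ws) \<subseteq> insert \<eta> T \<union> m_inv G ` insert \<eta> T"
        using ws(1) \<open>t \<in> T\<close> by auto
      show "foldr (\<otimes>) (t # ws) \<one> = x"
        using ws(3) x_eq by simp
      show "real (length (t # ws)) \<le> \<bar>f x / f \<eta>\<bar> + 1"
        using ws(2) k \<eta>(2) by simp
    qed
  qed
qed

end

section \<open>Units of augmentation one in the group ring over \<open>C\<^sub>2\<close>\<close>

locale complex_subring =
  fixes R :: "complex set"
  assumes zero_mem: "0 \<in> R" and one_mem: "1 \<in> R"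
    and uminus_mem: "x \<in> R \<Longrightarrow> - x \<in> R"
    and add_mem: "x \<in> R \<Longrightarrow> y \<in> R \<Longrightarrow> x + y \<in> R"
    and mult_mem: "x \<in> R \<Longrightarrow> y \<in> R \<Longrightarrow> x * y \<in> R"

definition twisted_augmentation :: "complex \<times> complex \<Rightarrow> complex" where
  "twisted_augmentation u = fst u - snd u"

lemma augmentation_mult:
  "augmentation (u \<otimes>\<^bsub>group_ring_C2 R\<^esub> v) = augmentation u * augmentation v"
  by (cases u; cases v) (simp add: group_ring_C2_def augmentation_def algebra_simps)

lemma twisted_augmentation_mult:
  "twisted_augmentation (u \<otimes>\<^bsub>group_ring_C2 R\<^esub> v) = twisted_augmentation u * twisted_augmentation v"
  by (cases u; cases v) (simp add: group_ring_C2_def twisted_augmentation_def algebra_simps)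

lemma augmentation_one: "augmentation \<one>\<^bsub>group_ring_C2 R\<^esub> = 1"
  by (simp add: group_ring_C2_def augmentation_def)

lemma twisted_augmentation_one: "twisted_augmentation \<one>\<^bsub>group_ring_C2 R\<^esub> = 1"
  by (simp add: group_ring_C2_def twisted_augmentation_def)

lemma eq_by_augmentations:
  assumes "augmentation u = 1"
  shows "u = ((1 + twisted_augmentation u) / 2, (1 - twisted_augmentation u) / 2)"
  using assms by (cases u) (simp add: augmentation_def twisted_augmentation_def field_simps)

context complex_subring
begin

lemma diff_mem: "x \<in> R \<Longrightarrow> y \<in> R \<Longrightarrow> x - y \<in> R"
  using add_mem[OF _ uminus_mem] by simp

lemma group_ring_C2_monoid: "monoid (group_ring_C2 R)"
  by (rule monoidI) (auto simp: group_ring_C2_def algebra_simps zero_mem one_mem add_mem mult_mem)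

lemma U1_group: "group (U1 R)"
proof -
  interpret monoid "group_ring_C2 R"
    by (rule group_ring_C2_monoid)
  interpret units: group "units_of (group_ring_C2 R)"
    by (rule units_group)
  let ?H = "{u \<in> Units (group_ring_C2 R). augmentation u = 1}"
  have "subgroup ?H (units_of (group_ring_C2 R))"
  proof (rule units.subgroupI)
    show "?H \<subseteq> carrier (units_of (group_ring_C2 R))"
      by (auto simp: units_of_carrier)
    show "?H \<noteq> {}"
      using augmentation_one by blast
  next
    fix u assume u: "u \<in> ?H"
    then have "augmentation u * augmentation (inv\<^bsub>group_ring_C2 R\<^esub> u) = 1"
      using augmentation_mult[where R=R and u=u and v="inv\<^bsub>group_ring_C2 R\<^esub> u"] augmentation_one
      by simp
    then show "inv\<^bsub>units_of (group_ring_C2 R)\<^esub> u \<in> ?H"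
      using u by (simp add: units_of_inv)
  next
    fix u v assume "u \<in> ?H" "v \<in> ?H"
    then show "u \<otimes>\<^bsub>units_of (group_ring_C2 R)\<^esub> v \<in> ?H"
      by (simp add: units_of_mult augmentation_mult)
  qed
  then show ?thesis
    unfolding U1_def by (rule units.subgroup_imp_group)
qed

lemma twisted_augmentation_unit:
  assumes "u \<in> carrier (U1 R)"
  shows "twisted_augmentation u \<in> R" "\<exists>y\<in>R. twisted_augmentation u * y = 1"
proof -
  interpret monoid "group_ring_C2 R"
    by (rule group_ring_C2_monoid)
  have twisted_mem: "twisted_augmentation v \<in> R" if "v \<in> R \<times> R" for v
    using that by (cases v) (auto simp: twisted_augmentation_def diff_mem)
  have u: "u \<in> Units (group_ring_C2 R)"
    using assms by (simp add: U1_def)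
  have carrier_eq: "carrier (group_ring_C2 R) = R \<times> R"
    by (simp add: group_ring_C2_def)
  show "twisted_augmentation u \<in> R"
    using twisted_mem Units_closed[OF u] carrier_eq by simp
  have "twisted_augmentation u * twisted_augmentation (inv\<^bsub>group_ring_C2 R\<^esub> u) = 1"
    using u twisted_augmentation_mult[where R=R and u=u and v="inv\<^bsub>group_ring_C2 R\<^esub> u"]
      twisted_augmentation_one
    by simp
  moreover have "twisted_augmentation (inv\<^bsub>group_ring_C2 R\<^esub> u) \<in> R"
    using twisted_mem Units_inv_closed[OF u] carrier_eq by simp
  ultimately show "\<exists>y\<in>R. twisted_augmentation u * y = 1"
    by blast
qed

lemma U1_log_additive: "additive_hom (U1 R) (\<lambda>u. ln (cmod (twisted_augmentation u)))"
proof -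
  have "u \<otimes>\<^bsub>U1 R\<^esub> v = u \<otimes>\<^bsub>group_ring_C2 R\<^esub> v" for u v
    by (simp add: U1_def units_of_def)
  moreover have "twisted_augmentation u \<noteq> 0" if "u \<in> carrier (U1 R)" for u
    using twisted_augmentation_unit(2)[OF that] by auto
  ultimately show ?thesis
    by (intro additive_hom.intro U1_group additive_hom_axioms.intro)
      (simp add: twisted_augmentation_mult norm_mult ln_mult)
qed

lemma U1_hyperbolic_if_units_discrete:
  assumes units_fin: "\<And>C. finite {x \<in> R. (\<exists>y\<in>R. x * y = 1) \<and> \<bar>ln (cmod x)\<bar> \<le> C}"
  shows "hyperbolic_group (U1 R)"
proof -
  interpret additive_hom "U1 R" "\<lambda>u. ln (cmod (twisted_augmentation u))"
    by (rule U1_log_additive)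
  show ?thesis
  proof (rule hyperbolic_if_sublevels_finite)
    fix C
    have "{u \<in> carrier (U1 R). \<bar>ln (cmod (twisted_augmentation u))\<bar> \<le> C}
        \<subseteq> (\<lambda>z. ((1 + z) / 2, (1 - z) / 2)) ` {x \<in> R. (\<exists>y\<in>R. x * y = 1) \<and> \<bar>ln (cmod x)\<bar> \<le> C}"
    proof
      fix u assume u: "u \<in> {u \<in> carrier (U1 R). \<bar>ln (cmod (twisted_augmentation u))\<bar> \<le> C}"
      then have "augmentation u = 1"
        by (simp add: U1_def)
      then show "u \<in> (\<lambda>z. ((1 + z) / 2, (1 - z) / 2))
          ` {x \<in> R. (\<exists>y\<in>R. x * y = 1) \<and> \<bar>ln (cmod x)\<bar> \<le> C}"
        using u twisted_augmentation_unit[of u] eq_by_augmentations[of u] by (intro image_eqI) auto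
    qed
    then show "finite {u \<in> carrier (U1 R). \<bar>ln (cmod (twisted_augmentation u))\<bar> \<le> C}"
      using finite_subset finite_imageI[OF units_fin] by blast
  qed
qed

end

section \<open>Quadratic algebraic integers\<close>

lemma map_poly_of_int_add:
  "map_poly (of_int :: int \<Rightarrow> 'a::ring_1) (p + q) = map_poly of_int p + map_poly of_int q"
  by (intro poly_eqI) (simp add: coeff_map_poly)

lemma map_poly_of_int_mult:
  "map_poly (of_int :: int \<Rightarrow> 'a::comm_ring_1) (p * q) = map_poly of_int p * map_poly of_int q"
  by (induction p) (simp_all add: map_poly_pCons map_poly_of_int_add map_poly_smult algebra_simps)

lemma poly_map_poly_of_int_degree_le_2:
  fixes x :: "'a::comm_ring_1"
  assumes "degree g \<le> 2"
  shows "poly (map_poly of_int g) x =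
    of_int (coeff g 0) + of_int (coeff g 1) * x + of_int (coeff g 2) * x\<^sup>2"
proof -
  have "g = [:coeff g 0, coeff g 1, coeff g 2:]"
    using assms
    by (intro poly_eqI) (auto simp: coeff_pCons coeff_eq_0 numeral_2_eq_2 split: nat.splits)
  then have "poly (map_poly of_int g) x =
      poly (map_poly of_int [:coeff g 0, coeff g 1, coeff g 2:]) x"
    by simp
  then show ?thesis
    by (simp add: map_poly_pCons algebra_simps power2_eq_square)
qed

lemma rational_combination_eq_0:
  fixes x a b :: "'a::field_char_0"
  assumes "x \<notin> \<rat>" "a \<in> \<rat>" "b \<in> \<rat>" "a + b * x = 0"
  shows "a = 0 \<and> b = 0"
proof (cases "b = 0")
  case False
  then have "x = - a / b"
    using assms(4) by (simp add: field_simps add_eq_0_iff)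
  then show ?thesis
    using assms(1-3) by simp
qed (use assms in simp)

lemma int_poly_eq_0_if_linear_root_irrational:
  fixes r :: "int poly" and x :: "'a::field_char_0"
  assumes "degree r \<le> 1" "x \<notin> \<rat>" "poly (map_poly of_int r) x = 0"
  shows "r = 0"
proof -
  have "of_int (coeff r 0) + of_int (coeff r 1) * x = 0"
    using assms(1,3) poly_map_poly_of_int_degree_le_2[of r x] by (simp add: coeff_eq_0)
  then have "coeff r 0 = 0" "coeff r 1 = 0"
    using rational_combination_eq_0[OF assms(2), of "of_int (coeff r 0)" "of_int (coeff r 1)"]
    by auto
  then have "coeff r n = 0" for n
    using assms(1) by (cases "n < 2") (auto simp: less_2_cases_iff coeff_eq_0)
  then show ?thesis
    by (simp add: poly_eq_iff)
qed

lemma abs_lead_coeff_eq_1_if_dvd_monic: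
  fixes g p q :: "int poly"
  assumes "content g = 1" "lead_coeff p = 1" "g \<noteq> 0"
    and eq: "smult (lead_coeff g ^ k) p = g * q"
  shows "\<bar>lead_coeff g\<bar> = 1"
proof -
  define c where "c = lead_coeff g"
  have "c \<noteq> 0"
    unfolding c_def using assms(3) by simp
  have lead: "c ^ k = c * lead_coeff q"
    using arg_cong[OF eq, of lead_coeff] assms(2,3) unfolding c_def by (simp add: lead_coeff_mult)
  have "content p = 1"
    using content_dvd_coeff[of p "degree p"] assms(2) normalize_content[of p] by simp
  then have content_q: "content q = \<bar>c\<bar> ^ k"
    using arg_cong[OF eq, of content] assms(1) by (simp add: content_mult power_abs c_def)
  show ?thesis
  proof (cases k)
    case 0
    then show ?thesis
      using lead by (auto simp: c_def zmult_eq_1_iff)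
  next
    case (Suc j)
    then have "lead_coeff q = c ^ j"
      using lead \<open>c \<noteq> 0\<close> by simp
    then have "\<bar>c\<bar> ^ Suc j dvd \<bar>c\<bar> ^ j"
      using content_dvd_coeff[of q "degree q"] content_q Suc by (simp add: power_abs[symmetric])
    then have "\<bar>c\<bar> * \<bar>c\<bar> ^ j \<le> 1 * \<bar>c\<bar> ^ j"
      using \<open>c \<noteq> 0\<close> by (auto dest!: zdvd_imp_le)
    then have "\<bar>c\<bar> \<le> 1"
      using \<open>c \<noteq> 0\<close> by (subst (asm) mult_le_cancel_right_pos) auto
    then show ?thesis
      using \<open>c \<noteq> 0\<close> unfolding c_def by linarith
  qed
qed

lemma primitive_int_poly_of_rational_quadratic:
  fixes x T N :: "'a::field_char_0"
  assumes "T \<in> \<rat>" "N \<in> \<rat>" and quadratic: "x\<^sup>2 = T * x - N"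
  obtains g :: "int poly" where "content g = 1" "degree g = 2" "poly (map_poly of_int g) x = 0"
proof -
  obtain t d where d: "d > 0" "T = of_int t / of_int d"
    using Rats_cases'[OF assms(1)] by metis
  obtain n e where e: "e > 0" "N = of_int n / of_int e"
    using Rats_cases'[OF assms(2)] by metis
  define g\<^sub>0 where "g\<^sub>0 = [:n * d, - (t * e), d * e:]"
  have "g\<^sub>0 \<noteq> 0"
    using d e unfolding g\<^sub>0_def by simp
  have clear: "of_int (d * e) * T = of_int (t * e)" "of_int (d * e) * N = of_int (n * d)"
    using d e by simp_all
  have "poly (map_poly of_int g\<^sub>0) x = of_int (n * d) - of_int (t * e) * x + of_int (d * e) * x\<^sup>2"
    unfolding g\<^sub>0_def by (simp add: map_poly_pCons algebra_simps power2_eq_square)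
  also have "\<dots> = of_int (d * e) * (x\<^sup>2 - T * x + N)"
    unfolding distrib_left right_diff_distrib mult.assoc[symmetric] clear by simp
  finally have "poly (map_poly of_int g\<^sub>0) x = 0"
    using quadratic by simp
  moreover have "poly (map_poly of_int g\<^sub>0) x =
      of_int (content g\<^sub>0) * poly (map_poly of_int (primitive_part g\<^sub>0)) x"
    by (subst (1) content_times_primitive_part[of g\<^sub>0, symmetric])
      (simp only: map_poly_smult poly_smult of_int_0 of_int_mult)
  ultimately have "poly (map_poly of_int (primitive_part g\<^sub>0)) x = 0"
    using \<open>g\<^sub>0 \<noteq> 0\<close> by simp
  moreover have "content (primitive_part g\<^sub>0) = 1" "degree (primitive_part g\<^sub>0) = 2"
    unfolding g\<^sub>0_def using d e by simp_all
  ultimately show ?thesis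
    using that by blast
qed

lemma abs_lead_coeff_eq_1_if_root_of_monic:
  fixes g p :: "int poly" and x :: "'a::field_char_0"
  assumes g: "content g = 1" "degree g = 2" "poly (map_poly of_int g) x = 0"
    and p: "lead_coeff p = 1" "poly (map_poly of_int p) x = 0"
    and "x \<notin> \<rat>"
  shows "\<bar>lead_coeff g\<bar> = 1"
proof -
  have "g \<noteq> 0"
    using g(2) by auto
  obtain q r where qr: "pseudo_divmod p g = (q, r)"
    by fastforce
  define k where "k = Suc (degree p) - degree g"
  have division: "smult (lead_coeff g ^ k) p = g * q + r"
    unfolding k_def using pseudo_divmod(1)[OF \<open>g \<noteq> 0\<close> qr] by simp
  have "degree r \<le> 1"
    using pseudo_divmod(2)[OF \<open>g \<noteq> 0\<close> qr] g(2) by auto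
  moreover have "poly (map_poly of_int r) x = 0"
    using arg_cong[OF division, of "\<lambda>s. poly (map_poly of_int s) x"] p(2) g(3)
    by (simp add: map_poly_smult map_poly_of_int_add map_poly_of_int_mult)
  ultimately have "r = 0"
    using int_poly_eq_0_if_linear_root_irrational \<open>x \<notin> \<rat>\<close> by blast
  then show ?thesis
    using abs_lead_coeff_eq_1_if_dvd_monic[OF g(1) p(1) \<open>g \<noteq> 0\<close>] division by simp
qed

lemma algebraic_int_quadratic_coeffs_Ints:
  fixes x T N :: "'a::field_char_0"
  assumes irrational: "x \<notin> \<rat>" and "algebraic_int x" "T \<in> \<rat>" "N \<in> \<rat>"
    and quadratic: "x\<^sup>2 = T * x - N"
  shows "T \<in> \<int> \<and> N \<in> \<int>"
proof -
  obtain p :: "int poly" where p: "lead_coeff p = 1" "poly (map_poly of_int p) x = 0"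
    using assms(2) unfolding algebraic_int_altdef_ipoly by blast
  obtain g :: "int poly" where g: "content g = 1" "degree g = 2" "poly (map_poly of_int g) x = 0"
    using primitive_int_poly_of_rational_quadratic[OF assms(3,4) quadratic] .
  have "\<bar>lead_coeff g\<bar> = 1"
    by (rule abs_lead_coeff_eq_1_if_root_of_monic[OF g p irrational])
  then have lead: "coeff g 2 = 1 \<or> coeff g 2 = -1"
    using g(2) by auto
  have "of_int (coeff g 0) + of_int (coeff g 1) * x + of_int (coeff g 2) * x\<^sup>2 = 0"
    using g(3) poly_map_poly_of_int_degree_le_2[of g x] g(2) by simp
  then have "(of_int (coeff g 0) - of_int (coeff g 2) * N)
      + (of_int (coeff g 1) + of_int (coeff g 2) * T) * x = 0"
    unfolding quadratic by (simp add: algebra_simps)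
  then have "of_int (coeff g 0) = of_int (coeff g 2) * N"
    "of_int (coeff g 1) = - of_int (coeff g 2) * T"
    using rational_combination_eq_0[OF irrational, of "of_int (coeff g 0) - of_int (coeff g 2) * N"
        "of_int (coeff g 1) + of_int (coeff g 2) * T"] assms(3,4)
    by (auto simp: add_eq_0_iff)
  then have "N = of_int (coeff g 2 * coeff g 0)" "T = of_int (- (coeff g 2 * coeff g 1))"
    using lead by auto
  then show ?thesis
    by simp
qed

lemma algebraic_int_if_monic_quadratic_root:
  fixes x T N :: "'a::field"
  assumes "T \<in> \<int>" "N \<in> \<int>" "x\<^sup>2 = T * x - N"
  shows "algebraic_int x"
proof
  show "poly [:N, - T, 1:] x = 0"
    using assms(3) by (simp add: algebra_simps power2_eq_square)
  show "lead_coeff [:N, - T, 1:] = 1"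
    by simp
  show "\<forall>i. coeff [:N, - T, 1:] i \<in> \<int>"
    using assms(1,2) by (auto simp: coeff_pCons split: nat.splits)
qed

lemma Ints_if_Rats_square_Ints:
  fixes z :: "'a::field_char_0"
  assumes "z \<in> \<rat>" "z\<^sup>2 \<in> \<int>"
  shows "z \<in> \<int>"
proof (rule rational_algebraic_int_is_int)
  show "algebraic_int z"
    using assms(2) by (intro algebraic_int_if_monic_quadratic_root[of 0 "- z\<^sup>2"]) simp_all
qed (rule assms(1))

lemma even_add_if_square_eq_discriminant_product:
  fixes A B U V Z :: int
  assumes "Z\<^sup>2 = (A\<^sup>2 - 4 * U) * (B\<^sup>2 - 4 * V)"
  shows "even (A * B + Z)"
proof (rule ccontr)
  assume odd: "odd (A * B + Z)"
  moreover have "Z - A * B = (A * B + Z) - 2 * (A * B)"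
    by simp
  ultimately have "odd ((Z - A * B) * (Z + A * B))"
    by (simp add: add.commute)
  moreover have "(Z - A * B) * (Z + A * B) = 4 * (4 * U * V - U * B\<^sup>2 - V * A\<^sup>2)"
    using assms by (simp add: algebra_simps power2_eq_square)
  ultimately show False
    by simp
qed

section \<open>The ring of integers of a quadratic field\<close>

locale quadratic_basis =
  fixes \<alpha> p q :: complex
  assumes irrational: "\<alpha> \<notin> \<rat>" and p_Rats: "p \<in> \<rat>" and q_Rats: "q \<in> \<rat>"
    and alpha_square: "\<alpha>\<^sup>2 = p + q * \<alpha>"
begin

definition field_K :: "complex set" where
  "field_K = {a + b * \<alpha> | a b. a \<in> \<rat> \<and> b \<in> \<rat>}"

text \<open>The nontrivial automorphism of \<open>field_K\<close> sends \<open>\<alpha>\<close> to the other root \<open>q - \<alpha>\<close>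
  of \<open>X\<^sup>2 - q X - p\<close>.\<close>

definition conjugate :: "complex \<Rightarrow> complex" where
  "conjugate x = (THE y. \<exists>a\<in>\<rat>. \<exists>b\<in>\<rat>. x = a + b * \<alpha> \<and> y = a + b * (q - \<alpha>))"

definition trace_K :: "complex \<Rightarrow> complex" where
  "trace_K x = x + conjugate x"

definition norm_K :: "complex \<Rightarrow> complex" where
  "norm_K x = x * conjugate x"

definition ints_K :: "complex set" where
  "ints_K = {x \<in> field_K. trace_K x \<in> \<int> \<and> norm_K x \<in> \<int>}"

lemma field_K_coords_unique:
  assumes "a \<in> \<rat>" "b \<in> \<rat>" "c \<in> \<rat>" "d \<in> \<rat>" "a + b * \<alpha> = c + d * \<alpha>"
  shows "a = c \<and> b = d"
proof -
  have "(a - c) + (b - d) * \<alpha> = 0"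
    using assms(5) by (simp add: algebra_simps)
  then show ?thesis
    using rational_combination_eq_0[OF irrational, of "a - c" "b - d"] assms(1-4) by auto
qed

lemma conjugate_eq:
  assumes "a \<in> \<rat>" "b \<in> \<rat>"
  shows "conjugate (a + b * \<alpha>) = a + b * (q - \<alpha>)"
  unfolding conjugate_def
proof (rule the_equality)
  fix y assume "\<exists>a'\<in>\<rat>. \<exists>b'\<in>\<rat>. a + b * \<alpha> = a' + b' * \<alpha> \<and> y = a' + b' * (q - \<alpha>)"
  then obtain a' b' where "a' \<in> \<rat>" "b' \<in> \<rat>" "a + b * \<alpha> = a' + b' * \<alpha>" "y = a' + b' * (q - \<alpha>)"
    by blast
  then show "y = a + b * (q - \<alpha>)"
    using field_K_coords_unique[of a b a' b'] assms by simp
qed (use assms in blast)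

lemma field_KE:
  assumes "x \<in> field_K"
  obtains a b where "a \<in> \<rat>" "b \<in> \<rat>" "x = a + b * \<alpha>"
  using assms unfolding field_K_def by blast

lemma field_KI: "a \<in> \<rat> \<Longrightarrow> b \<in> \<rat> \<Longrightarrow> a + b * \<alpha> \<in> field_K"
  unfolding field_K_def by blast

lemma mult_in_basis:
  assumes "\<beta>\<^sup>2 = p + q * \<beta>"
  shows "(a + b * \<beta>) * (c + d * \<beta>) = (a * c + b * d * p) + (a * d + b * c + b * d * q) * \<beta>"
proof -
  have "(a + b * \<beta>) * (c + d * \<beta>) = a * c + (a * d + b * c) * \<beta> + b * d * \<beta>\<^sup>2"
    by (simp add: algebra_simps power2_eq_square)
  then show ?thesis
    using assms by (simp add: algebra_simps)
qed

lemma conjugate_root_square: "(q - \<alpha>)\<^sup>2 = p + q * (q - \<alpha>)"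
  using alpha_square by (simp add: power2_eq_square algebra_simps)

lemma field_K_mult:
  assumes "x \<in> field_K" "y \<in> field_K"
  shows "x * y \<in> field_K" "conjugate (x * y) = conjugate x * conjugate y"
proof -
  obtain a b where ab: "a \<in> \<rat>" "b \<in> \<rat>" and x: "x = a + b * \<alpha>"
    using assms(1) by (rule field_KE)
  obtain c d where cd: "c \<in> \<rat>" "d \<in> \<rat>" and y: "y = c + d * \<alpha>"
    using assms(2) by (rule field_KE)
  have coords: "a * c + b * d * p \<in> \<rat>" "a * d + b * c + b * d * q \<in> \<rat>"
    using ab cd p_Rats q_Rats by auto
  have xy: "x * y = (a * c + b * d * p) + (a * d + b * c + b * d * q) * \<alpha>"
    unfolding x y by (rule mult_in_basis[OF alpha_square])
  then show "x * y \<in> field_K"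
    using field_KI[OF coords] by simp
  have "conjugate (x * y) = (a * c + b * d * p) + (a * d + b * c + b * d * q) * (q - \<alpha>)"
    unfolding xy by (rule conjugate_eq[OF coords])
  then show "conjugate (x * y) = conjugate x * conjugate y"
    unfolding x y conjugate_eq[OF ab] conjugate_eq[OF cd] mult_in_basis[OF conjugate_root_square] .
qed

lemma field_K_add:
  assumes "x \<in> field_K" "y \<in> field_K"
  shows "x + y \<in> field_K" "conjugate (x + y) = conjugate x + conjugate y"
proof -
  obtain a b where ab: "a \<in> \<rat>" "b \<in> \<rat>" and x: "x = a + b * \<alpha>"
    using assms(1) by (rule field_KE)
  obtain c d where cd: "c \<in> \<rat>" "d \<in> \<rat>" and y: "y = c + d * \<alpha>"
    using assms(2) by (rule field_KE)
  have coords: "a + c \<in> \<rat>" "b + d \<in> \<rat>"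
    using ab cd by auto
  have xy: "x + y = (a + c) + (b + d) * \<alpha>"
    unfolding x y by (simp add: algebra_simps)
  then show "x + y \<in> field_K"
    using field_KI[OF coords] by simp
  have "conjugate (x + y) = (a + c) + (b + d) * (q - \<alpha>)"
    unfolding xy by (rule conjugate_eq[OF coords])
  then show "conjugate (x + y) = conjugate x + conjugate y"
    unfolding x y conjugate_eq[OF ab] conjugate_eq[OF cd] by (simp add: algebra_simps)
qed

lemma field_K_Rats:
  assumes "r \<in> \<rat>"
  shows "r \<in> field_K" "conjugate r = r"
  using field_KI[OF assms, of 0] conjugate_eq[OF assms, of 0] by simp_all

lemma trace_norm_Rats:
  assumes "x \<in> field_K"
  shows "trace_K x \<in> \<rat>" "norm_K x \<in> \<rat>"
proof -
  obtain a b where ab: "a \<in> \<rat>" "b \<in> \<rat>" and x: "x = a + b * \<alpha>"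
    using assms by (rule field_KE)
  have "trace_K x = 2 * a + b * q"
    unfolding trace_K_def x conjugate_eq[OF ab] by (simp add: algebra_simps)
  then show "trace_K x \<in> \<rat>"
    using ab q_Rats by simp
  have "norm_K x = a * a + a * b * q + b * b * (q * \<alpha> - \<alpha>\<^sup>2)"
    unfolding norm_K_def x conjugate_eq[OF ab] by (simp add: algebra_simps power2_eq_square)
  also have "\<dots> = a * a + a * b * q - b * b * p"
    using alpha_square by simp
  finally show "norm_K x \<in> \<rat>"
    using ab p_Rats q_Rats by simp
qed

lemma square_eq_trace_norm: "x\<^sup>2 = trace_K x * x - norm_K x"
  unfolding trace_K_def norm_K_def by (simp add: algebra_simps power2_eq_square)

lemma algebraic_int_iff_ints_K:
  assumes "x \<in> field_K"
  shows "algebraic_int x \<longleftrightarrow> x \<in> ints_K"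
proof
  assume "algebraic_int x"
  show "x \<in> ints_K"
  proof (cases "x \<in> \<rat>")
    case True
    then have "x \<in> \<int>"
      using rational_algebraic_int_is_int \<open>algebraic_int x\<close> by blast
    then show ?thesis
      using assms field_K_Rats[OF True] unfolding ints_K_def trace_K_def norm_K_def by simp
  next
    case False
    then show ?thesis
      using algebraic_int_quadratic_coeffs_Ints[OF False \<open>algebraic_int x\<close>
          trace_norm_Rats[OF assms] square_eq_trace_norm] assms
      unfolding ints_K_def by simp
  qed
next
  assume "x \<in> ints_K"
  then show "algebraic_int x"
    using algebraic_int_if_monic_quadratic_root[OF _ _ square_eq_trace_norm]
    unfolding ints_K_def by simp
qed

lemma ints_K_field_K: "x \<in> ints_K \<Longrightarrow> x \<in> field_K"
  unfolding ints_K_def by simp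

lemma ints_K_trace_Ints: "x \<in> ints_K \<Longrightarrow> trace_K x \<in> \<int>"
  unfolding ints_K_def by simp

lemma ints_K_norm_Ints: "x \<in> ints_K \<Longrightarrow> norm_K x \<in> \<int>"
  unfolding ints_K_def by simp

lemma norm_K_mult:
  "x \<in> field_K \<Longrightarrow> y \<in> field_K \<Longrightarrow> norm_K (x * y) = norm_K x * norm_K y"
  unfolding norm_K_def by (simp add: field_K_mult)

text \<open>With \<open>A, U\<close> and \<open>B, V\<close> the traces and norms of \<open>x\<close> and \<open>y\<close>, the number
  \<open>z = (x - x') (y - y')\<close> is rational with \<open>z\<^sup>2 = (A\<^sup>2 - 4U) (B\<^sup>2 - 4V)\<close>, hence an integer of the
  same parity as \<open>A B\<close>, and \<open>z + A B\<close> is twice the trace of \<open>x y\<close>.\<close>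

lemma trace_K_mult_Ints:
  assumes x: "x \<in> ints_K" and y: "y \<in> ints_K"
  shows "trace_K (x * y) \<in> \<int>"
proof -
  have K: "x \<in> field_K" "y \<in> field_K"
    using x y by (simp_all add: ints_K_field_K)
  obtain A U B V where
    A: "trace_K x = of_int A" and U: "norm_K x = of_int U" and
    B: "trace_K y = of_int B" and V: "norm_K y = of_int V"
    using ints_K_trace_Ints ints_K_norm_Ints x y by (metis Ints_cases)
  define z where "z = (x - conjugate x) * (y - conjugate y)"
  have "z = 2 * trace_K (x * y) - trace_K x * trace_K y"
    unfolding z_def trace_K_def field_K_mult(2)[OF K] by (simp add: algebra_simps)
  then have z_eq: "z = 2 * trace_K (x * y) - of_int (A * B)"
    using A B by simp
  have "(x - conjugate x)\<^sup>2 = (trace_K x)\<^sup>2 - 4 * norm_K x"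
    "(y - conjugate y)\<^sup>2 = (trace_K y)\<^sup>2 - 4 * norm_K y"
    unfolding trace_K_def norm_K_def by (simp_all add: algebra_simps power2_eq_square)
  then have z_square: "z\<^sup>2 = of_int ((A\<^sup>2 - 4 * U) * (B\<^sup>2 - 4 * V))"
    unfolding z_def power_mult_distrib A B U V by simp
  have "z \<in> \<rat>"
    unfolding z_eq using trace_norm_Rats(1)[OF field_K_mult(1)[OF K]] by simp
  then obtain Z where Z: "z = of_int Z"
    using Ints_if_Rats_square_Ints[of z] z_square by (auto elim: Ints_cases)
  then have "Z\<^sup>2 = (A\<^sup>2 - 4 * U) * (B\<^sup>2 - 4 * V)"
    using z_square by (metis of_int_eq_iff of_int_power)
  then obtain W where W: "A * B + Z = 2 * W"
    using even_add_if_square_eq_discriminant_product by blast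
  have "2 * trace_K (x * y) = of_int (A * B + Z)"
    using z_eq Z by simp
  then have "2 * trace_K (x * y) = 2 * of_int W"
    unfolding W by simp
  then show ?thesis
    by simp
qed

lemma ints_K_mult: "x \<in> ints_K \<Longrightarrow> y \<in> ints_K \<Longrightarrow> x * y \<in> ints_K"
  unfolding ints_K_def
  using trace_K_mult_Ints[unfolded ints_K_def] field_K_mult norm_K_mult by auto

lemma ints_K_add:
  assumes "x \<in> ints_K" "y \<in> ints_K"
  shows "x + y \<in> ints_K"
proof -
  have K: "x \<in> field_K" "y \<in> field_K"
    using assms by (simp_all add: ints_K_field_K)
  have "trace_K (x + y) = trace_K x + trace_K y"
    unfolding trace_K_def field_K_add(2)[OF K] by simp
  moreover have "norm_K (x + y) = norm_K x + norm_K y + trace_K x * trace_K y - trace_K (x * y)"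
    unfolding norm_K_def trace_K_def field_K_add(2)[OF K] field_K_mult(2)[OF K]
    by (simp add: algebra_simps)
  ultimately show ?thesis
    using assms field_K_add(1)[OF K] trace_K_mult_Ints
    unfolding ints_K_def by auto
qed

lemma of_int_ints_K: "of_int n \<in> ints_K"
  using field_K_Rats[of "of_int n"] unfolding ints_K_def trace_K_def norm_K_def by simp

lemma ints_K_subring: "complex_subring ints_K"
proof
  show "0 \<in> ints_K" "1 \<in> ints_K"
    using of_int_ints_K[of 0] of_int_ints_K[of 1] by simp_all
  show "- x \<in> ints_K" if "x \<in> ints_K" for x
    using ints_K_mult[OF of_int_ints_K[of "- 1"] that] by simp
qed (simp_all add: ints_K_add ints_K_mult)

lemma norm_K_unit:
  assumes "x \<in> ints_K" "y \<in> ints_K" "x * y = 1"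
  shows "norm_K x = 1 \<or> norm_K x = - 1"
proof -
  obtain U V where U: "norm_K x = of_int U" and V: "norm_K y = of_int V"
    using ints_K_norm_Ints assms(1,2) by (metis Ints_cases)
  have "norm_K x * norm_K y = norm_K 1"
    using norm_K_mult[of x y] assms by (simp add: ints_K_field_K)
  also have "norm_K 1 = 1"
    using field_K_Rats(2)[of 1] unfolding norm_K_def by simp
  finally have "U * V = 1"
    using U V by (metis of_int_eq_1_iff of_int_mult)
  then show ?thesis
    using U by (auto simp: zmult_eq_1_iff)
qed

text \<open>A unit \<open>x\<close> with \<open>|ln |x|| \<le> C\<close> has \<open>|x|, |x'| \<le> e\<^sup>C\<close> because \<open>x x' = \<plusminus>1\<close>,
  so it is a root of one of the finitely many polynomials \<open>X\<^sup>2 - t X \<plusminus> 1\<close> with \<open>|t| \<le> 2 e\<^sup>C\<close>.\<close>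

lemma finite_units_log_bounded:
  "finite {x \<in> ints_K. (\<exists>y\<in>ints_K. x * y = 1) \<and> \<bar>ln (cmod x)\<bar> \<le> C}"
proof -
  define B where "B = \<lceil>2 * exp C\<rceil>"
  define roots where
    "roots = (\<Union>t\<in>{-B..B}. \<Union>n\<in>{-1, 1}. {z. poly [:of_int n, - of_int t, 1:] z = (0::complex)})"
  have "finite roots"
    unfolding roots_def
    by (intro finite_UN_I finite_atLeastAtMost_int finite.intros poly_roots_finite) auto
  moreover have "{x \<in> ints_K. (\<exists>y\<in>ints_K. x * y = 1) \<and> \<bar>ln (cmod x)\<bar> \<le> C} \<subseteq> roots"
  proof
    fix x assume "x \<in> {x \<in> ints_K. (\<exists>y\<in>ints_K. x * y = 1) \<and> \<bar>ln (cmod x)\<bar> \<le> C}"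
    then obtain y where x: "x \<in> ints_K" and y: "y \<in> ints_K" "x * y = 1"
      and log_bound: "\<bar>ln (cmod x)\<bar> \<le> C"
      by blast
    obtain n :: int where n: "norm_K x = of_int n" "n \<in> {-1, 1}"
      using norm_K_unit[OF x y] by (metis insertCI of_int_1 of_int_minus)
    obtain t where t: "trace_K x = of_int t"
      using ints_K_trace_Ints[OF x] by (auto elim: Ints_cases)
    have "cmod x > 0"
      using y(2) by auto
    then have x_bounds: "exp (- C) \<le> cmod x" "cmod x \<le> exp C"
      using log_bound by (metis abs_le_iff exp_ln exp_le_cancel_iff minus_le_iff)+
    have "cmod x * cmod (conjugate x) = 1"
      using n by (auto simp: norm_K_def simp flip: norm_mult)
    moreover have "1 \<le> cmod x * exp C"
      using x_bounds(1) by (simp add: exp_minus field_simps)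
    ultimately have "cmod (conjugate x) \<le> exp C"
      using \<open>cmod x > 0\<close> mult_le_cancel_left_pos[of "cmod x" "cmod (conjugate x)" "exp C"] by simp
    moreover have "\<bar>real_of_int t\<bar> = cmod (x + conjugate x)"
      using t unfolding trace_K_def by (metis norm_of_int)
    ultimately have "\<bar>real_of_int t\<bar> \<le> 2 * exp C"
      using x_bounds norm_triangle_ineq[of x "conjugate x"] by linarith
    then have "t \<in> {-B..B}"
      unfolding B_def by (auto simp: abs_le_iff) linarith+
    moreover have "poly [:of_int n, - of_int t, 1:] x = 0"
      using square_eq_trace_norm[of x] n(1) t by (simp add: algebra_simps power2_eq_square)
    ultimately show "x \<in> roots"
      unfolding roots_def using n(2) by blast
  qed
  ultimately show ?thesis
    by (rule finite_subset[rotated])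
qed

end

theorem mainTheorem7:
  fixes K :: "complex set"
  assumes "quadratic_field K"
  shows "hyperbolic_group (U1 (ring_of_integers K))"
proof -
  obtain \<alpha> where "subfield_of_complex K" "\<alpha> \<in> K" "\<alpha> \<notin> \<rat>"
    and K: "K = {of_rat a + of_rat b * \<alpha> | a b. True}"
    using assms unfolding quadratic_field_def by blast
  then have "\<alpha> * \<alpha> \<in> K"
    unfolding subfield_of_complex_def by blast
  then obtain a b where "\<alpha> * \<alpha> = of_rat a + of_rat b * \<alpha>"
    using K by blast
  then interpret quadratic_basis \<alpha> "of_rat a" "of_rat b"
    using \<open>\<alpha> \<notin> \<rat>\<close> by unfold_locales (simp_all add: power2_eq_square)
  have "K = field_K"
    unfolding K field_K_def Rats_def by blast
  then have "ring_of_integers K = ints_K"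
    unfolding ring_of_integers_def using algebraic_int_iff_ints_K ints_K_field_K by blast
  then show ?thesis
    using complex_subring.U1_hyperbolic_if_units_discrete[OF ints_K_subring]
      finite_units_log_bounded
    by simp
qed

end
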